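(* Let $d\ge 2$ and let $\mathcal A$ be the space of closed curves with constant speed parametrization defined below, equipped with the Riemannian metric $\langle v,w\rangle_{T_\eta\mathcal A}=L(\eta)\int_0^1 v(s)\cdot w(s)\,ds$. Then the associated Riemannian distance $d_{\mathcal A}$ is non-degenerate: for all $\eta_0,\eta_1\in\mathcal A$ with $\eta_0\neq\eta_1$ one has $d_{\mathcal A}(\eta_0,\eta_1)>0$.
   Context: $\mathbb S^1=\mathbb R/\mathbb Z$. $\mathcal K=\{\eta\in H^2(\mathbb S^1;\mathbb R^d):\int_0^1\eta(s)\,ds=0\}$, $L(\eta)=\int_0^1|\partial_s\eta|\,ds$, and $\mathcal A=\{\eta\in\mathcal K: |\partial_s\eta(s)|=L(\eta)>0\ \text{for all } s\in\mathbb S^1\}$, a smooth Hilbert submanifold of $\mathcal K$. For a $C^1$ path $\eta:[0,1]\to\mathcal A$ its Riemannian length is $\int_0^1\|\dot\eta(t)\|_{L^2(\mathbb S^1)}\sqrt{L(\eta(t))}\,dt$, and $d_{\mathcal A}(\eta_0,\eta_1)$ is the infimum of the lengths of such paths with $\eta(0)=\eta_0$, $\eta(1)=\eta_1$. *)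

theory Defs
  imports "HOL-Analysis.Analysis"
begin

text \<open>Curves on S^1 = R/Z are represented as 1-periodic functions
  real => real^'d (the continuous representative of an H^2 class).\<close>

type_synonym 'd curve = "real \<Rightarrow> real^'d"

definition periodic1 :: "('d::finite) curve \<Rightarrow> bool" where
  "periodic1 \<eta> \<longleftrightarrow> (\<forall>s. \<eta> (s + 1) = \<eta> s)"

definition weak_second_deriv :: "('d::finite) curve \<Rightarrow> 'd curve \<Rightarrow> bool" where
  "weak_second_deriv \<eta> g \<longleftrightarrow>
     (\<forall>s. \<eta> differentiable (at s)) \<and>
     (\<forall>a b. g absolutely_integrable_on {a..b} \<and>
        (a \<le> b \<longrightarrow> (g has_integral
            (vector_derivative \<eta> (at b) - vector_derivative \<eta> (at a))) {a..b}))"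

definition in_H2 :: "('d::finite) curve \<Rightarrow> bool" where
  "in_H2 \<eta> \<longleftrightarrow> periodic1 \<eta> \<and>
     (\<exists>g. weak_second_deriv \<eta> g \<and> (\<lambda>s. (norm (g s))\<^sup>2) integrable_on {0..1})"

text \<open>H^2 norm (well defined since the weak second derivative is unique a.e.)\<close>
definition H2_norm :: "('d::finite) curve \<Rightarrow> real" where
  "H2_norm \<eta> = sqrt (integral {0..1} (\<lambda>s. (norm (\<eta> s))\<^sup>2
       + (norm (vector_derivative \<eta> (at s)))\<^sup>2
       + (norm ((SOME g. weak_second_deriv \<eta> g) s))\<^sup>2))"

definition L2_norm :: "('d::finite) curve \<Rightarrow> real" where
  "L2_norm v = sqrt (integral {0..1} (\<lambda>s. (norm (v s))\<^sup>2))"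

definition in_K :: "('d::finite) curve \<Rightarrow> bool" where
  "in_K \<eta> \<longleftrightarrow> in_H2 \<eta> \<and> integral {0..1} \<eta> = 0"

definition curve_length :: "('d::finite) curve \<Rightarrow> real" where
  "curve_length \<eta> = integral {0..1} (\<lambda>s. norm (vector_derivative \<eta> (at s)))"

definition in_A :: "('d::finite) curve \<Rightarrow> bool" where
  "in_A \<eta> \<longleftrightarrow> in_K \<eta> \<and> curve_length \<eta> > 0 \<and>
     (\<forall>s. norm (vector_derivative \<eta> (at s)) = curve_length \<eta>)"

definition C1_path_A :: "(real \<Rightarrow> ('d::finite) curve) \<Rightarrow> (real \<Rightarrow> 'd curve) \<Rightarrow> bool" where
  "C1_path_A \<gamma> \<gamma>' \<longleftrightarrow>
     (\<forall>t\<in>{0..1}. in_A (\<gamma> t) \<and> in_H2 (\<gamma>' t)) \<and>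
     (\<forall>t\<in>{0..1}. ((\<lambda>h. H2_norm (\<lambda>s. (1 / h) *\<^sub>R (\<gamma> (t + h) s - \<gamma> t s) - \<gamma>' t s))
                   \<longlongrightarrow> 0) (at 0 within {h. t + h \<in> {0..1}})) \<and>
     (\<forall>t\<in>{0..1}. ((\<lambda>u. H2_norm (\<lambda>s. \<gamma>' u s - \<gamma>' t s)) \<longlongrightarrow> 0) (at t within {0..1}))"

definition riem_length :: "(real \<Rightarrow> ('d::finite) curve) \<Rightarrow> (real \<Rightarrow> 'd curve) \<Rightarrow> real" where
  "riem_length \<gamma> \<gamma>' = integral {0..1} (\<lambda>t. L2_norm (\<gamma>' t) * sqrt (curve_length (\<gamma> t)))"

text \<open>Riemannian distance, as an extended real (infimum over the empty set is +infinity).\<close>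
definition dist_A :: "('d::finite) curve \<Rightarrow> 'd curve \<Rightarrow> ereal" where
  "dist_A \<eta>0 \<eta>1 = (INF p \<in> {(\<gamma>, \<gamma>'). C1_path_A \<gamma> \<gamma>' \<and> \<gamma> 0 = \<eta>0 \<and> \<gamma> 1 = \<eta>1}.
                      ereal (riem_length (fst p) (snd p)))"

end

theory Submission
  imports Defs
begin

(* Let w = \<eta>1 - \<eta>0 and, along a C^1 path \<gamma> from \<eta>0 to \<eta>1, \<psi>(t) = \<integral> \<gamma>(t) \<bullet> w.
   Then \<psi>(1) - \<psi>(0) = \<integral> |w|^2 > 0.  A closed curve of constant speed L with zero mean
   satisfies |\<gamma>(t)(s)| \<le> L, so |\<psi>| \<le> B L(\<gamma>) with B = max |w|, while |\<psi>'| \<le> B |\<gamma>'|_{L^2}.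
   For G(x) = x |x|^{1/2} (signed_pow_three_halves) the chain rule therefore gives
   |(G \<circ> \<psi>)'| \<le> (3/2) B^{3/2} |\<gamma>'|_{L^2} L(\<gamma>)^{1/2}, the integrand of the Riemannian length
   up to a constant factor.  Every path from \<eta>0 to \<eta>1 thus has length at least
   (G(\<psi>(1)) - G(\<psi>(0))) / ((3/2) B^{3/2}) > 0, a bound that does not depend on the path. *)

section \<open>Integrals over intervals\<close>

lemma integral_nonneg_unconditional:
  fixes f :: "'a::euclidean_space \<Rightarrow> real"
  assumes "\<And>x. x \<in> S \<Longrightarrow> 0 \<le> f x"
  shows "0 \<le> integral S f"
  using assms integral_nonneg not_integrable_integral by (metis order_refl)

lemma square_le_if_quadratic_nonneg:
  fixes A B C :: real
  assumes "\<And>t. 0 \<le> A - 2*t*C + t\<^sup>2*B" and "B \<ge> 0"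
  shows "C\<^sup>2 \<le> A*B"
proof (cases "B = 0")
  case True
  show ?thesis
  proof (rule ccontr)
    assume "\<not> ?thesis"
    then have "C \<noteq> 0" using True by simp
    have "0 \<le> A - 2*((A+1)/(2*C))*C" using assms(1)[of "(A+1)/(2*C)"] True by simp
    also have "\<dots> = -1" using \<open>C \<noteq> 0\<close> by (simp add: field_simps)
    finally show False by simp
  qed
next
  case False
  then have "B > 0" using assms(2) by simp
  have "0 \<le> A - 2*(C/B)*C + (C/B)\<^sup>2*B" using assms(1) .
  also have "\<dots> = A - C\<^sup>2/B" using \<open>B > 0\<close> by (simp add: field_simps power2_eq_square)
  finally show ?thesis using \<open>B > 0\<close> by (simp add: field_simps)
qed

lemma Cauchy_Schwarz_integral:
  fixes f g :: "'a::euclidean_space \<Rightarrow> real"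
  assumes f2: "(\<lambda>x. (f x)\<^sup>2) integrable_on S" and g2: "(\<lambda>x. (g x)\<^sup>2) integrable_on S"
    and fg: "(\<lambda>x. f x * g x) integrable_on S"
  shows "(integral S (\<lambda>x. f x * g x))\<^sup>2 \<le> integral S (\<lambda>x. (f x)\<^sup>2) * integral S (\<lambda>x. (g x)\<^sup>2)"
proof (rule square_le_if_quadratic_nonneg)
  fix t :: real
  have i1: "(\<lambda>x. (f x)\<^sup>2 - 2 * t * (f x * g x)) integrable_on S"
    using f2 fg by (intro integrable_diff integrable_on_mult_right)
  have i2: "(\<lambda>x. t\<^sup>2 * (g x)\<^sup>2) integrable_on S"
    using g2 by (rule integrable_on_mult_right)
  have "0 \<le> integral S (\<lambda>x. (f x - t * g x)\<^sup>2)"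
    by (rule integral_nonneg_unconditional) simp
  also have "(\<lambda>x. (f x - t * g x)\<^sup>2) = (\<lambda>x. ((f x)\<^sup>2 - 2 * t * (f x * g x)) + t\<^sup>2 * (g x)\<^sup>2)"
    by (simp add: power2_eq_square algebra_simps)
  also have "integral S \<dots> = integral S (\<lambda>x. (f x)\<^sup>2) - 2 * t * integral S (\<lambda>x. f x * g x)
      + t\<^sup>2 * integral S (\<lambda>x. (g x)\<^sup>2)"
    using f2 fg i1 i2 by (simp add: integral_add integral_diff integrable_on_mult_right)
  finally show "0 \<le> integral S (\<lambda>x. (f x)\<^sup>2) - 2 * t * integral S (\<lambda>x. f x * g x)
      + t\<^sup>2 * integral S (\<lambda>x. (g x)\<^sup>2)" .
qed (rule integral_nonneg_unconditional, simp)

lemma integral_norm_mult_le: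
  fixes a :: "real \<Rightarrow> 'a::euclidean_space" and b :: "real \<Rightarrow> 'b::euclidean_space"
  assumes ca: "continuous_on {l..u} a" and cb: "continuous_on {l..u} b"
  shows "integral {l..u} (\<lambda>s. norm (a s) * norm (b s))
    \<le> sqrt (integral {l..u} (\<lambda>s. (norm (a s))\<^sup>2)) * sqrt (integral {l..u} (\<lambda>s. (norm (b s))\<^sup>2))"
proof -
  have "(integral {l..u} (\<lambda>s. norm (a s) * norm (b s)))\<^sup>2
      \<le> integral {l..u} (\<lambda>s. (norm (a s))\<^sup>2) * integral {l..u} (\<lambda>s. (norm (b s))\<^sup>2)"
    by (intro Cauchy_Schwarz_integral integrable_continuous_interval continuous_intros ca cb)
  moreover have "0 \<le> integral {l..u} (\<lambda>s. norm (a s) * norm (b s))"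
    by (rule integral_nonneg_unconditional) simp
  ultimately show ?thesis
    by (metis real_le_rsqrt real_sqrt_mult)
qed

lemma integral_norm_eq_0_if_interval_integrals_eq_0:
  fixes h :: "real \<Rightarrow> 'a::euclidean_space"
  assumes h: "h absolutely_integrable_on {l..u}" and zero: "\<And>a b. integral {a..b} h = 0"
  shows "integral {l..u} (\<lambda>x. norm (h x)) = 0"
proof -
  have hi: "h integrable_on cbox l u" and ni: "(\<lambda>x. norm (h x)) integrable_on cbox l u"
    using h absolutely_integrable_on_def by auto
  text \<open>Henstock's lemma turns the vanishing of the integrals of \<open>h\<close> over the tags' intervals
    into smallness of the Riemann sums of \<open>norm \<circ> h\<close>.\<close>
  have less: "integral {l..u} (\<lambda>x. norm (h x)) < 2 * e" if "e > 0" for e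
  proof -
    obtain \<gamma>1 where "gauge \<gamma>1"
      and henstock: "\<And>p. p tagged_partial_division_of cbox l u \<Longrightarrow> \<gamma>1 fine p \<Longrightarrow>
        (\<Sum>(x,k)\<in>p. norm (Henstock_Kurzweil_Integration.content k *\<^sub>R h x - integral k h)) < e"
      using Henstock_lemma[OF hi \<open>e > 0\<close>] by blast
    obtain \<gamma>2 where "gauge \<gamma>2"
      and riemann: "\<And>D. D tagged_division_of cbox l u \<Longrightarrow> \<gamma>2 fine D \<Longrightarrow>
        norm ((\<Sum>(x,k)\<in>D. Henstock_Kurzweil_Integration.content k *\<^sub>R norm (h x))
          - integral (cbox l u) (\<lambda>x. norm (h x))) < e"
      using integrable_integral[OF ni] \<open>e > 0\<close> unfolding has_integral by meson
    obtain D where D: "D tagged_division_of cbox l u" "(\<lambda>x. \<gamma>1 x \<inter> \<gamma>2 x) fine D"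
      using fine_division_exists[OF gauge_Int[OF \<open>gauge \<gamma>1\<close> \<open>gauge \<gamma>2\<close>]] by blast
    then have fine: "\<gamma>1 fine D" "\<gamma>2 fine D" by (auto simp: fine_Int)
    have "(\<Sum>(x,k)\<in>D. norm (Henstock_Kurzweil_Integration.content k *\<^sub>R h x - integral k h))
        = (\<Sum>(x,k)\<in>D. Henstock_Kurzweil_Integration.content k *\<^sub>R norm (h x))"
    proof (intro sum.cong refl, clarify)
      fix x k assume "(x, k) \<in> D"
      then obtain a b where "k = cbox a b" using tagged_division_ofD(4)[OF D(1)] by blast
      then show "norm (Henstock_Kurzweil_Integration.content k *\<^sub>R h x - integral k h)
          = Henstock_Kurzweil_Integration.content k *\<^sub>R norm (h x)"
        using zero[of a b] by simp
    qed
    then have "(\<Sum>(x,k)\<in>D. Henstock_Kurzweil_Integration.content k *\<^sub>R norm (h x)) < e"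
      using henstock[OF _ fine(1)] D(1) tagged_division_of_def by metis
    with riemann[OF D(1) fine(2)] show ?thesis by simp
  qed
  have "0 \<le> integral {l..u} (\<lambda>x. norm (h x))"
    by (rule integral_nonneg_unconditional) simp
  with less[of "integral {l..u} (\<lambda>x. norm (h x)) / 4"] show ?thesis by fastforce
qed

lemma negligible_nonzero_if_integral_norm_eq_0:
  fixes h :: "real \<Rightarrow> 'a::euclidean_space"
  assumes h: "h absolutely_integrable_on S" and "S \<in> sets lebesgue"
    and zero: "integral S (\<lambda>x. norm (h x)) = 0"
  shows "negligible {x\<in>S. h x \<noteq> 0}"
proof -
  let ?k = "\<lambda>x. indicator S x *\<^sub>R h x"
  have ki: "integrable lebesgue ?k" using h set_integrable_def by blast
  have "(\<integral>x. norm (?k x) \<partial>lebesgue) = (LINT x:S|lebesgue. norm (h x))"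
    unfolding set_lebesgue_integral_def by (intro Bochner_Integration.integral_cong) (auto simp: indicator_def)
  also have "\<dots> = 0"
    using set_lebesgue_integral_eq_integral(2)[OF set_integrable_norm[OF h]] zero by simp
  finally have "emeasure lebesgue {x\<in>space lebesgue. ?k x \<noteq> 0} = 0"
    using integral_norm_eq_0_iff[OF ki] by simp
  moreover have "{x\<in>space lebesgue. ?k x \<noteq> 0} = {x\<in>S. h x \<noteq> 0}"
    by (auto simp: indicator_def)
  moreover have "{x\<in>space lebesgue. ?k x \<noteq> 0} \<in> sets lebesgue"
    using borel_measurable_integrable[OF ki] by measurable
  ultimately show ?thesis
    by (simp add: negligible_iff_null_sets null_sets_def)
qed

lemma square_integrable_diff:
  fixes f g :: "real \<Rightarrow> 'a::euclidean_space"
  assumes "f absolutely_integrable_on S" and "g absolutely_integrable_on S" and "S \<in> sets lebesgue"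
    and f2: "(\<lambda>s. (norm (f s))\<^sup>2) integrable_on S" and g2: "(\<lambda>s. (norm (g s))\<^sup>2) integrable_on S"
  shows "(\<lambda>s. (norm (f s - g s))\<^sup>2) integrable_on S"
proof (rule measurable_bounded_by_integrable_imp_integrable_real)
  have "f \<in> borel_measurable (lebesgue_on S)" "g \<in> borel_measurable (lebesgue_on S)"
    using assms absolutely_integrable_measurable by auto
  then show "(\<lambda>s. (norm (f s - g s))\<^sup>2) \<in> borel_measurable (lebesgue_on S)"
    by measurable
  show "(\<lambda>s. 2 * (norm (f s))\<^sup>2 + 2 * (norm (g s))\<^sup>2) integrable_on S"
    using f2 g2 by (intro integrable_add integrable_on_mult_right)
  show "\<bar>(norm (f s - g s))\<^sup>2\<bar> \<le> 2 * (norm (f s))\<^sup>2 + 2 * (norm (g s))\<^sup>2" for s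
  proof -
    have "(norm (f s - g s))\<^sup>2 \<le> (norm (f s) + norm (g s))\<^sup>2"
      by (intro power_mono norm_triangle_ineq4) simp
    also have "\<dots> \<le> 2 * (norm (f s))\<^sup>2 + 2 * (norm (g s))\<^sup>2"
      using zero_le_power2[of "norm (f s) - norm (g s)"] unfolding power2_diff power2_sum by linarith
    finally show ?thesis by simp
  qed
qed (rule assms)

section \<open>Curves with a square integrable weak second derivative\<close>

abbreviation velocity :: "('d::finite) curve \<Rightarrow> 'd curve" where
  "velocity \<eta> \<equiv> \<lambda>s. vector_derivative \<eta> (at s)"

definition H2_regular :: "('d::finite) curve \<Rightarrow> bool" where
  "H2_regular v \<longleftrightarrow> (\<exists>g. weak_second_deriv v g \<and> (\<lambda>s. (norm (g s))\<^sup>2) integrable_on {0..1})"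

lemma in_H2_imp_H2_regular: "in_H2 \<eta> \<Longrightarrow> H2_regular \<eta>"
  unfolding in_H2_def H2_regular_def by blast

lemma in_A_imp_H2_regular: "in_A \<eta> \<Longrightarrow> H2_regular \<eta>"
  unfolding in_A_def in_K_def by (blast intro: in_H2_imp_H2_regular)

lemma weak_second_deriv_imp_differentiable: "weak_second_deriv v g \<Longrightarrow> v differentiable at s"
  unfolding weak_second_deriv_def by blast

lemma weak_second_deriv_imp_continuous_on: "weak_second_deriv v g \<Longrightarrow> continuous_on S v"
  by (meson weak_second_deriv_imp_differentiable differentiable_at_imp_differentiable_on
      differentiable_imp_continuous_on)

lemma weak_second_deriv_imp_continuous_on_velocity:
  assumes "weak_second_deriv v g"
  shows "continuous_on {a..b} (velocity v)"
proof -
  have "g integrable_on {a..b}"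
    using assms set_lebesgue_integral_eq_integral(1) unfolding weak_second_deriv_def by blast
  then have "continuous_on {a..b} (\<lambda>x. velocity v a + integral {a..x} g)"
    by (intro continuous_intros indefinite_integral_continuous_1)
  moreover have "velocity v a + integral {a..x} g = velocity v x" if "x \<in> {a..b}" for x
  proof -
    have "(g has_integral (velocity v x - velocity v a)) {a..x}"
      using assms that unfolding weak_second_deriv_def by auto
    then show ?thesis by (simp add: integral_unique)
  qed
  ultimately show ?thesis by (rule continuous_on_eq)
qed

lemma weak_second_deriv_unique_ae:
  assumes g1: "weak_second_deriv v g1" and g2: "weak_second_deriv v g2"
  shows "negligible {x\<in>{0..1}. g1 x \<noteq> g2 x}"
proof -
  let ?h = "\<lambda>x. g1 x - g2 x"
  have h: "?h absolutely_integrable_on {0..1}"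
    using g1 g2 unfolding weak_second_deriv_def by (intro set_integral_diff(1)) auto
  have "integral {a..b} ?h = 0" for a b
  proof (cases "a \<le> b")
    case True
    then have "(?h has_integral ((velocity v b - velocity v a) - (velocity v b - velocity v a))) {a..b}"
      using g1 g2 unfolding weak_second_deriv_def by (intro has_integral_diff) auto
    then show ?thesis by (simp add: integral_unique)
  qed simp
  then have "integral {0..1} (\<lambda>x. norm (?h x)) = 0"
    by (rule integral_norm_eq_0_if_interval_integrals_eq_0[OF h])
  then show ?thesis
    using negligible_nonzero_if_integral_norm_eq_0[OF h] by simp
qed

lemma weak_second_deriv_diff:
  assumes a: "weak_second_deriv a ga" and b: "weak_second_deriv b gb"
  shows "weak_second_deriv (\<lambda>s. a s - b s) (\<lambda>s. ga s - gb s)"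
  unfolding weak_second_deriv_def
proof (intro conjI allI impI)
  have da: "a differentiable at s" and db: "b differentiable at s" for s
    using a b by (auto intro: weak_second_deriv_imp_differentiable)
  then show "(\<lambda>s. a s - b s) differentiable at s" for s
    by (intro differentiable_diff)
  show "(\<lambda>s. ga s - gb s) absolutely_integrable_on {x..y}" for x y
    using a b unfolding weak_second_deriv_def by (intro set_integral_diff(1)) auto
  fix x y :: real assume "x \<le> y"
  then have "((\<lambda>s. ga s - gb s) has_integral
      ((velocity a y - velocity a x) - (velocity b y - velocity b x))) {x..y}"
    using a b unfolding weak_second_deriv_def by (intro has_integral_diff) auto
  then show "((\<lambda>s. ga s - gb s) has_integral
      (velocity (\<lambda>s. a s - b s) y - velocity (\<lambda>s. a s - b s) x)) {x..y}"
    using da db by (simp add: algebra_simps)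
qed

lemma vector_derivative_scaleR_const:
  "a differentiable at x \<Longrightarrow> vector_derivative (\<lambda>s. c *\<^sub>R a s) (at x) = c *\<^sub>R vector_derivative a (at x)"
  using vector_derivative_scaleR_at[of "\<lambda>s. c" x a] by simp

lemma weak_second_deriv_scaleR:
  assumes a: "weak_second_deriv a ga"
  shows "weak_second_deriv (\<lambda>s. c *\<^sub>R a s) (\<lambda>s. c *\<^sub>R ga s)"
  unfolding weak_second_deriv_def
proof (intro conjI allI impI)
  have da: "a differentiable at s" for s
    using a by (rule weak_second_deriv_imp_differentiable)
  then show "(\<lambda>s. c *\<^sub>R a s) differentiable at s" for s
    by (intro differentiable_scaleR) auto
  show "(\<lambda>s. c *\<^sub>R ga s) absolutely_integrable_on {x..y}" for x y
    using a unfolding weak_second_deriv_def by (intro absolutely_integrable_scaleR_left) auto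
  fix x y :: real assume "x \<le> y"
  then have "((\<lambda>s. c *\<^sub>R ga s) has_integral (c *\<^sub>R (velocity a y - velocity a x))) {x..y}"
    using a unfolding weak_second_deriv_def by (intro has_integral_cmul) auto
  then show "((\<lambda>s. c *\<^sub>R ga s) has_integral
      (velocity (\<lambda>s. c *\<^sub>R a s) y - velocity (\<lambda>s. c *\<^sub>R a s) x)) {x..y}"
    using da by (simp add: vector_derivative_scaleR_const algebra_simps)
qed

lemma H2_regular_differentiable: "H2_regular v \<Longrightarrow> v differentiable at s"
  unfolding H2_regular_def by (blast intro: weak_second_deriv_imp_differentiable)

lemma H2_regular_continuous_on: "H2_regular v \<Longrightarrow> continuous_on S v"
  unfolding H2_regular_def by (blast intro: weak_second_deriv_imp_continuous_on)

lemma H2_regular_continuous_on_velocity: "H2_regular v \<Longrightarrow> continuous_on {a..b} (velocity v)"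
  unfolding H2_regular_def by (blast intro: weak_second_deriv_imp_continuous_on_velocity)

lemma H2_regular_diff:
  assumes "H2_regular a" "H2_regular b"
  shows "H2_regular (\<lambda>s. a s - b s)"
proof -
  obtain ga gb where ga: "weak_second_deriv a ga" "(\<lambda>s. (norm (ga s))\<^sup>2) integrable_on {0..1}"
    and gb: "weak_second_deriv b gb" "(\<lambda>s. (norm (gb s))\<^sup>2) integrable_on {0..1}"
    using assms unfolding H2_regular_def by blast
  have "(\<lambda>s. (norm (ga s - gb s))\<^sup>2) integrable_on {0..1}"
    using ga gb unfolding weak_second_deriv_def by (intro square_integrable_diff) auto
  then show ?thesis
    unfolding H2_regular_def using weak_second_deriv_diff[OF ga(1) gb(1)] by blast
qed

lemma H2_regular_scaleR:
  assumes "H2_regular a"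
  shows "H2_regular (\<lambda>s. c *\<^sub>R a s)"
proof -
  obtain ga where ga: "weak_second_deriv a ga" "(\<lambda>s. (norm (ga s))\<^sup>2) integrable_on {0..1}"
    using assms unfolding H2_regular_def by blast
  have "(\<lambda>s. (norm (c *\<^sub>R ga s))\<^sup>2) integrable_on {0..1}"
    using integrable_on_mult_right[OF ga(2), of "c\<^sup>2"] by (simp add: power_mult_distrib)
  then show ?thesis
    unfolding H2_regular_def using weak_second_deriv_scaleR[OF ga(1)] by blast
qed

text \<open>The weak second derivative chosen in \<^const>\<open>H2_norm\<close> by Hilbert choice is square
  integrable, because it agrees almost everywhere with any other one.\<close>

lemma H2_norm_integrand_integrable:
  assumes "H2_regular v"
  shows "(\<lambda>s. (norm (v s))\<^sup>2 + (norm (velocity v s))\<^sup>2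
    + (norm ((SOME g. weak_second_deriv v g) s))\<^sup>2) integrable_on {0..1}"
proof -
  obtain g where g: "weak_second_deriv v g" "(\<lambda>s. (norm (g s))\<^sup>2) integrable_on {0..1}"
    using assms unfolding H2_regular_def by blast
  let ?g = "SOME g. weak_second_deriv v g"
  have "weak_second_deriv v ?g" using g(1) by (rule someI[where P = "weak_second_deriv v"])
  then have "negligible {x\<in>{0..1}. ?g x \<noteq> g x}" using g(1) by (rule weak_second_deriv_unique_ae)
  then have "(\<lambda>s. (norm (?g s))\<^sup>2) integrable_on {0..1}"
    by (rule integrable_spike[OF g(2)]) auto
  moreover have "(\<lambda>s. (norm (v s))\<^sup>2) integrable_on {0..1}"
    "(\<lambda>s. (norm (velocity v s))\<^sup>2) integrable_on {0..1}"
    using H2_regular_continuous_on[OF assms] H2_regular_continuous_on_velocity[OF assms]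
    by (intro integrable_continuous_interval continuous_intros; simp)+
  ultimately show ?thesis by (intro integrable_add)
qed

lemma L2_norm_le_H2_norm:
  assumes "H2_regular v"
  shows "L2_norm v \<le> H2_norm v" and "L2_norm (velocity v) \<le> H2_norm v"
  using H2_regular_continuous_on[OF assms] H2_regular_continuous_on_velocity[OF assms]
  unfolding L2_norm_def H2_norm_def
  by (intro real_sqrt_le_mono integral_le H2_norm_integrand_integrable[OF assms]
      integrable_continuous_interval continuous_intros; simp)+

lemma L2_norm_nonneg: "0 \<le> L2_norm v"
  unfolding L2_norm_def by (intro real_sqrt_ge_zero integral_nonneg_unconditional) simp

lemma L2_norm_squared: "(L2_norm v)\<^sup>2 = integral {0..1} (\<lambda>s. (norm (v s))\<^sup>2)"
  unfolding L2_norm_def by (intro real_sqrt_pow2 integral_nonneg_unconditional) simp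

lemma integral_norm_le_L2_norm:
  assumes "continuous_on {0..1} v"
  shows "integral {0..1} (\<lambda>s. norm (v s)) \<le> L2_norm v"
  using integral_norm_mult_le[OF assms, of "\<lambda>s. 1::real"] unfolding L2_norm_def by simp

lemma L2_norm_triangle_ineq:
  assumes ca: "continuous_on {0..1} a" and cb: "continuous_on {0..1} b"
  shows "L2_norm (\<lambda>s. a s + b s) \<le> L2_norm a + L2_norm b"
proof -
  have "(L2_norm (\<lambda>s. a s + b s))\<^sup>2 \<le> integral {0..1} (\<lambda>s. (norm (a s))\<^sup>2
      + 2 * (norm (a s) * norm (b s)) + (norm (b s))\<^sup>2)"
    unfolding L2_norm_squared
  proof (rule integral_le)
    show "(\<lambda>s. (norm (a s + b s))\<^sup>2) integrable_on {0..1}"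
      "(\<lambda>s. (norm (a s))\<^sup>2 + 2 * (norm (a s) * norm (b s)) + (norm (b s))\<^sup>2) integrable_on {0..1}"
      by (intro integrable_continuous_interval continuous_intros ca cb)+
    show "(norm (a s + b s))\<^sup>2 \<le> (norm (a s))\<^sup>2 + 2 * (norm (a s) * norm (b s)) + (norm (b s))\<^sup>2" for s
      using power_mono[OF norm_triangle_ineq norm_ge_zero, of "a s" "b s" 2] by (simp add: power2_sum)
  qed
  also have "\<dots> = (L2_norm a)\<^sup>2 + 2 * integral {0..1} (\<lambda>s. norm (a s) * norm (b s)) + (L2_norm b)\<^sup>2"
    unfolding L2_norm_squared
    by (simp add: integral_add integrable_on_mult_right integrable_continuous_interval
        continuous_intros ca cb)
  also have "\<dots> \<le> (L2_norm a + L2_norm b)\<^sup>2"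
    using integral_norm_mult_le[OF ca cb] unfolding L2_norm_def by (simp add: power2_sum)
  finally show ?thesis
    using L2_norm_nonneg by (meson add_nonneg_nonneg power2_le_imp_le)
qed

lemma L2_norm_diff_le:
  assumes "continuous_on {0..1} a" and "continuous_on {0..1} b"
  shows "\<bar>L2_norm a - L2_norm b\<bar> \<le> L2_norm (\<lambda>s. a s - b s)"
proof -
  have cd: "continuous_on {0..1} (\<lambda>s. a s - b s)" "continuous_on {0..1} (\<lambda>s. b s - a s)"
    using assms by (auto intro: continuous_intros)
  have "L2_norm a \<le> L2_norm (\<lambda>s. a s - b s) + L2_norm b"
    using L2_norm_triangle_ineq[OF cd(1) assms(2)] by simp
  moreover have "L2_norm b \<le> L2_norm (\<lambda>s. a s - b s) + L2_norm a"
    using L2_norm_triangle_ineq[OF cd(2) assms(1)] by (simp add: L2_norm_def norm_minus_commute)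
  ultimately show ?thesis by linarith
qed

definition L2_inner :: "('d::finite) curve \<Rightarrow> 'd curve \<Rightarrow> real" where
  "L2_inner v w = integral {0..1} (\<lambda>s. v s \<bullet> w s)"

lemma abs_L2_inner_le:
  assumes "continuous_on {0..1} v" and "continuous_on {0..1} w"
    and wB: "\<And>s. s \<in> {0..1} \<Longrightarrow> norm (w s) \<le> B"
  shows "\<bar>L2_inner v w\<bar> \<le> B * integral {0..1} (\<lambda>s. norm (v s))"
proof -
  have "norm (integral {0..1} (\<lambda>s. v s \<bullet> w s)) \<le> integral {0..1} (\<lambda>s. B * norm (v s))"
  proof (rule integral_norm_bound_integral)
    show "(\<lambda>s. v s \<bullet> w s) integrable_on {0..1}" "(\<lambda>s. B * norm (v s)) integrable_on {0..1}"
      by (intro integrable_continuous_interval continuous_intros assms)+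
    show "norm (v s \<bullet> w s) \<le> B * norm (v s)" if "s \<in> {0..1}" for s
      using Cauchy_Schwarz_ineq2[of "v s" "w s"] mult_left_mono[OF wB[OF that], of "norm (v s)"]
      by (simp add: mult.commute)
  qed
  then show ?thesis unfolding L2_inner_def by simp
qed

lemma L2_inner_lt_if_differ:
  assumes ca: "continuous_on {0..1} a" and cb: "continuous_on {0..1} b"
    and "s \<in> {0..1}" and "a s \<noteq> b s"
  shows "L2_inner a (\<lambda>s. b s - a s) < L2_inner b (\<lambda>s. b s - a s)"
proof -
  have cd: "continuous_on {0..1} (\<lambda>s. (norm (b s - a s))\<^sup>2)"
    by (intro continuous_intros ca cb)
  have "L2_inner b (\<lambda>s. b s - a s) - L2_inner a (\<lambda>s. b s - a s)
      = integral {0..1} (\<lambda>s. b s \<bullet> (b s - a s) - a s \<bullet> (b s - a s))"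
    unfolding L2_inner_def
    by (intro integral_diff[symmetric] integrable_continuous_interval continuous_intros ca cb)
  also have "\<dots> = integral {0..1} (\<lambda>s. (norm (b s - a s))\<^sup>2)"
    by (simp add: inner_diff_left[symmetric] power2_norm_eq_inner)
  also have "\<dots> > 0"
  proof -
    have "integral {0..1} (\<lambda>s. (norm (b s - a s))\<^sup>2) \<noteq> 0"
      using integral_cbox_eq_0_iff[of 0 1 "\<lambda>s. (norm (b s - a s))\<^sup>2"] cd assms(3,4)
      by (auto simp: cbox_interval)
    then show ?thesis by (simp add: integral_nonneg_unconditional order_less_le)
  qed
  finally show ?thesis by simp
qed

section \<open>Closed curves of constant speed\<close>

lemma periodic1_add_of_int:
  assumes "periodic1 \<eta>"
  shows "\<eta> (x + of_int n) = \<eta> x"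
proof -
  have nat: "\<eta> (y + of_nat m) = \<eta> y" for y m
  proof (induction m)
    case (Suc m)
    have "\<eta> (y + of_nat (Suc m)) = \<eta> ((y + of_nat m) + 1)" by (simp add: algebra_simps)
    also have "\<dots> = \<eta> (y + of_nat m)" using assms unfolding periodic1_def by blast
    finally show ?case using Suc by simp
  qed simp
  show ?thesis
  proof (cases "n \<ge> 0")
    case True
    then show ?thesis using nat[of x "nat n"] by simp
  next
    case False
    then show ?thesis using nat[of "x + of_int n" "nat (- n)"] by simp
  qed
qed

lemma periodic1_eqI:
  assumes "periodic1 \<eta>0" and "periodic1 \<eta>1" and eq: "\<And>s. s \<in> {0..1} \<Longrightarrow> \<eta>0 s = \<eta>1 s"
  shows "\<eta>0 = \<eta>1"
proof
  fix x :: real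
  have "x - of_int \<lfloor>x\<rfloor> \<in> {0..1}"
    using frac_ge_0[of x] frac_lt_1[of x] unfolding frac_def by simp
  with assms show "\<eta>0 x = \<eta>1 x"
    using periodic1_add_of_int[of _ "x - of_int \<lfloor>x\<rfloor>" "\<lfloor>x\<rfloor>"] by (metis diff_add_cancel)
qed

lemma in_A_lipschitz:
  assumes "in_A \<eta>"
  shows "norm (\<eta> x - \<eta> y) \<le> curve_length \<eta> * norm (x - y)"
proof (rule differentiable_bound[where S=UNIV and f'="\<lambda>x h. h *\<^sub>R velocity \<eta> x"])
  fix z :: real
  show "(\<eta> has_derivative (\<lambda>h. h *\<^sub>R velocity \<eta> z)) (at z within UNIV)"
    using H2_regular_differentiable[OF in_A_imp_H2_regular[OF assms]]
    by (simp add: vector_derivative_works has_vector_derivative_def)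
  have "onorm (\<lambda>h::real. h *\<^sub>R velocity \<eta> z) = norm (velocity \<eta> z)"
    using onorm_scaleR_left[OF bounded_linear_ident] by (simp add: onorm_id)
  then show "onorm (\<lambda>h::real. h *\<^sub>R velocity \<eta> z) \<le> curve_length \<eta>"
    using assms unfolding in_A_def by simp
qed auto

text \<open>Since \<open>\<eta>\<close> has mean zero, \<open>\<eta> s = \<integral>\<^sub>0\<^sup>1 (\<eta> s - \<eta> r) dr\<close>.\<close>

lemma in_A_norm_le_curve_length:
  assumes A: "in_A \<eta>" and s: "s \<in> {0..1}"
  shows "norm (\<eta> s) \<le> curve_length \<eta>"
proof -
  have ie: "\<eta> integrable_on {0..1}"
    by (rule integrable_continuous_interval[OF H2_regular_continuous_on[OF in_A_imp_H2_regular[OF A]]])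
  have "integral {0..1} (\<lambda>r. \<eta> s - \<eta> r) = \<eta> s"
    using integral_diff[OF integrable_const_ivl ie, of "\<eta> s"] A unfolding in_A_def in_K_def by simp
  moreover have "norm (integral {0..1} (\<lambda>r. \<eta> s - \<eta> r)) \<le> integral {0..1} (\<lambda>r::real. curve_length \<eta>)"
  proof (rule integral_norm_bound_integral)
    show "(\<lambda>r. \<eta> s - \<eta> r) integrable_on {0..1}" "(\<lambda>r::real. curve_length \<eta>) integrable_on {0..1}"
      using ie by (auto intro: integrable_diff)
    fix r :: real assume "r \<in> {0..1}"
    then have "curve_length \<eta> * norm (s - r) \<le> curve_length \<eta>"
      using A s unfolding in_A_def by (intro mult_right_le_one_le) auto
    then show "norm (\<eta> s - \<eta> r) \<le> curve_length \<eta>"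
      using in_A_lipschitz[OF A] order_trans by blast
  qed
  ultimately show ?thesis by simp
qed

lemma curve_length_diff_le:
  assumes "H2_regular a" and "H2_regular b"
  shows "\<bar>curve_length a - curve_length b\<bar> \<le> integral {0..1} (\<lambda>s. norm (velocity a s - velocity b s))"
proof -
  have ca: "continuous_on {0..1} (velocity a)" and cb: "continuous_on {0..1} (velocity b)"
    using assms by (auto intro: H2_regular_continuous_on_velocity)
  have "curve_length a - curve_length b
      = integral {0..1} (\<lambda>s. norm (velocity a s) - norm (velocity b s))"
    unfolding curve_length_def
    by (intro integral_diff[symmetric] integrable_continuous_interval continuous_intros ca cb)
  also have "norm \<dots> \<le> integral {0..1} (\<lambda>s. norm (velocity a s - velocity b s))"
    by (intro integral_norm_bound_integral integrable_continuous_interval continuous_intros ca cb)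
      (simp add: norm_triangle_ineq3)
  finally show ?thesis by simp
qed

section \<open>Paths in the space of curves\<close>

lemma tendsto_at_within_if_offset_dominated:
  fixes f :: "real \<Rightarrow> real"
  assumes bound: "\<And>h. t + h \<in> S \<Longrightarrow> h \<noteq> 0 \<Longrightarrow> \<bar>f (t + h) - l\<bar> \<le> g h"
    and g: "(g \<longlongrightarrow> 0) (at 0 within {h. t + h \<in> S})"
  shows "(f \<longlongrightarrow> l) (at t within S)"
  unfolding tendsto_iff eventually_at
proof (intro allI impI)
  fix e :: real assume "e > 0"
  have "((\<lambda>h. f (t + h) - l) \<longlongrightarrow> 0) (at 0 within {h. t + h \<in> S})"
    by (rule Lim_null_comparison[OF _ g]) (auto simp: eventually_at_filter intro!: always_eventually bound)
  with \<open>e > 0\<close> obtain d where "d > 0"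
    and d: "\<forall>x\<in>{h. t + h \<in> S}. x \<noteq> 0 \<and> dist x 0 < d \<longrightarrow> dist (f (t + x) - l) 0 < e"
    unfolding tendsto_iff eventually_at by blast
  have "dist (f y) l < e" if "y \<in> S" "y \<noteq> t \<and> dist y t < d" for y
    using d[rule_format, of "y - t"] that by (auto simp: dist_real_def)
  with \<open>d > 0\<close> show "\<exists>d>0. \<forall>y\<in>S. y \<noteq> t \<and> dist y t < d \<longrightarrow> dist (f y) l < e"
    by blast
qed

definition diff_quotient ::
    "(real \<Rightarrow> ('d::finite) curve) \<Rightarrow> (real \<Rightarrow> 'd curve) \<Rightarrow> real \<Rightarrow> real \<Rightarrow> 'd curve"
  where "diff_quotient \<gamma> \<gamma>' t h = (\<lambda>s. (1 / h) *\<^sub>R (\<gamma> (t + h) s - \<gamma> t s) - \<gamma>' t s)"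

context
  fixes \<gamma> \<gamma>' :: "real \<Rightarrow> ('d::finite) curve"
  assumes path: "C1_path_A \<gamma> \<gamma>'"
begin

lemma C1_path_A_in_A: "t \<in> {0..1} \<Longrightarrow> in_A (\<gamma> t)"
  using path unfolding C1_path_A_def by blast

lemma C1_path_A_H2_regular: "t \<in> {0..1} \<Longrightarrow> H2_regular (\<gamma> t)"
  using C1_path_A_in_A in_A_imp_H2_regular by blast

lemma C1_path_A_H2_regular_derivative: "t \<in> {0..1} \<Longrightarrow> H2_regular (\<gamma>' t)"
  using path in_H2_imp_H2_regular unfolding C1_path_A_def by blast

lemma C1_path_A_diff_quotient_tendsto:
  "t \<in> {0..1} \<Longrightarrow>
    ((\<lambda>h. H2_norm (diff_quotient \<gamma> \<gamma>' t h)) \<longlongrightarrow> 0) (at 0 within {h. t + h \<in> {0..1}})"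
  using path unfolding C1_path_A_def diff_quotient_def by blast

lemma C1_path_A_derivative_continuous:
  "t \<in> {0..1} \<Longrightarrow> ((\<lambda>u. H2_norm (\<lambda>s. \<gamma>' u s - \<gamma>' t s)) \<longlongrightarrow> 0) (at t within {0..1})"
  using path unfolding C1_path_A_def by blast

lemma H2_regular_diff_quotient:
  assumes "t \<in> {0..1}" and "t + h \<in> {0..1}"
  shows "H2_regular (diff_quotient \<gamma> \<gamma>' t h)"
  unfolding diff_quotient_def
  by (intro H2_regular_diff H2_regular_scaleR C1_path_A_H2_regular C1_path_A_H2_regular_derivative assms)

lemma velocity_path_diff:
  assumes t: "t \<in> {0..1}" and th: "t + h \<in> {0..1}" and "h \<noteq> 0"
  shows "velocity (\<gamma> (t + h)) s - velocity (\<gamma> t) s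
    = h *\<^sub>R (velocity (diff_quotient \<gamma> \<gamma>' t h) s + velocity (\<gamma>' t) s)"
proof -
  have d: "\<gamma> (t + h) differentiable at s" "\<gamma> t differentiable at s" "\<gamma>' t differentiable at s"
    by (intro H2_regular_differentiable C1_path_A_H2_regular C1_path_A_H2_regular_derivative t th)+
  then have "velocity (diff_quotient \<gamma> \<gamma>' t h) s
      = (1 / h) *\<^sub>R (velocity (\<gamma> (t + h)) s - velocity (\<gamma> t) s) - velocity (\<gamma>' t) s"
    unfolding diff_quotient_def
    by (simp add: vector_derivative_diff_at vector_derivative_scaleR_const)
  with \<open>h \<noteq> 0\<close> show ?thesis by simp
qed

lemma curve_length_path_diff_le:
  assumes t: "t \<in> {0..1}" and th: "t + h \<in> {0..1}" and "h \<noteq> 0"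
  shows "\<bar>curve_length (\<gamma> (t + h)) - curve_length (\<gamma> t)\<bar>
    \<le> \<bar>h\<bar> * (H2_norm (diff_quotient \<gamma> \<gamma>' t h) + H2_norm (\<gamma>' t))"
proof -
  let ?Q = "diff_quotient \<gamma> \<gamma>' t h"
  have HQ: "H2_regular ?Q" and Hc: "H2_regular (\<gamma>' t)"
    by (intro H2_regular_diff_quotient C1_path_A_H2_regular_derivative t th)+
  have cQ: "continuous_on {0..1} (velocity ?Q)" and cc: "continuous_on {0..1} (velocity (\<gamma>' t))"
    by (intro H2_regular_continuous_on_velocity HQ Hc)+
  have "\<bar>curve_length (\<gamma> (t + h)) - curve_length (\<gamma> t)\<bar>
      \<le> integral {0..1} (\<lambda>s. \<bar>h\<bar> * norm (velocity ?Q s + velocity (\<gamma>' t) s))"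
    using curve_length_diff_le[OF C1_path_A_H2_regular C1_path_A_H2_regular, OF th t]
    by (simp add: velocity_path_diff[OF t th \<open>h \<noteq> 0\<close>])
  also have "\<dots> \<le> \<bar>h\<bar> * (L2_norm (velocity ?Q) + L2_norm (velocity (\<gamma>' t)))"
  proof -
    have "continuous_on {0..1} (\<lambda>s. velocity ?Q s + velocity (\<gamma>' t) s)"
      by (intro continuous_intros cQ cc)
    from order_trans[OF integral_norm_le_L2_norm[OF this] L2_norm_triangle_ineq[OF cQ cc]]
    show ?thesis by (simp add: mult_left_mono)
  qed
  also have "\<dots> \<le> \<bar>h\<bar> * (H2_norm ?Q + H2_norm (\<gamma>' t))"
    by (intro mult_left_mono add_mono L2_norm_le_H2_norm HQ Hc) simp
  finally show ?thesis .
qed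

lemma continuous_on_curve_length_path: "continuous_on {0..1} (\<lambda>t. curve_length (\<gamma> t))"
  unfolding continuous_on_def
proof
  fix t :: real assume t: "t \<in> {0..1}"
  let ?g = "\<lambda>h. \<bar>h\<bar> * (H2_norm (diff_quotient \<gamma> \<gamma>' t h) + H2_norm (\<gamma>' t))"
  have "(?g \<longlongrightarrow> \<bar>0\<bar> * (0 + H2_norm (\<gamma>' t))) (at 0 within {h. t + h \<in> {0..1}})"
    by (intro tendsto_mult tendsto_add tendsto_const tendsto_rabs tendsto_ident_at
        C1_path_A_diff_quotient_tendsto[OF t])
  then have "(?g \<longlongrightarrow> 0) (at 0 within {h. t + h \<in> {0..1}})"
    by simp
  then show "((\<lambda>t. curve_length (\<gamma> t)) \<longlongrightarrow> curve_length (\<gamma> t)) (at t within {0..1})"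
    by (rule tendsto_at_within_if_offset_dominated[rotated]) (rule curve_length_path_diff_le[OF t]; assumption)
qed

lemma continuous_on_L2_norm_derivative_path: "continuous_on {0..1} (\<lambda>t. L2_norm (\<gamma>' t))"
  unfolding continuous_on_def
proof
  fix t :: real assume t: "t \<in> {0..1}"
  have "\<bar>L2_norm (\<gamma>' u) - L2_norm (\<gamma>' t)\<bar> \<le> H2_norm (\<lambda>s. \<gamma>' u s - \<gamma>' t s)" if "u \<in> {0..1}" for u
  proof -
    have Hu: "H2_regular (\<gamma>' u)" and Ht: "H2_regular (\<gamma>' t)"
      using that t by (auto intro: C1_path_A_H2_regular_derivative)
    have "\<bar>L2_norm (\<gamma>' u) - L2_norm (\<gamma>' t)\<bar> \<le> L2_norm (\<lambda>s. \<gamma>' u s - \<gamma>' t s)"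
      by (intro L2_norm_diff_le H2_regular_continuous_on Hu Ht)
    also have "\<dots> \<le> H2_norm (\<lambda>s. \<gamma>' u s - \<gamma>' t s)"
      by (intro L2_norm_le_H2_norm H2_regular_diff Hu Ht)
    finally show ?thesis .
  qed
  then have "((\<lambda>u. L2_norm (\<gamma>' u) - L2_norm (\<gamma>' t)) \<longlongrightarrow> 0) (at t within {0..1})"
    by (intro Lim_null_comparison[OF _ C1_path_A_derivative_continuous[OF t]])
      (auto simp: eventually_at_filter)
  then show "((\<lambda>u. L2_norm (\<gamma>' u)) \<longlongrightarrow> L2_norm (\<gamma>' t)) (at t within {0..1})"
    by (subst Lim_null)
qed

lemma L2_inner_diff_quotient:
  assumes t: "t \<in> {0..1}" and th: "t + h \<in> {0..1}" and cw: "continuous_on {0..1} w"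
  shows "L2_inner (diff_quotient \<gamma> \<gamma>' t h) w
    = (L2_inner (\<gamma> (t + h)) w - L2_inner (\<gamma> t) w) / h - L2_inner (\<gamma>' t) w"
proof -
  have c: "continuous_on {0..1} (\<gamma> (t + h))" "continuous_on {0..1} (\<gamma> t)"
    "continuous_on {0..1} (\<gamma>' t)"
    by (intro H2_regular_continuous_on C1_path_A_H2_regular C1_path_A_H2_regular_derivative t th)+
  have i: "(\<lambda>s. \<gamma> (t + h) s \<bullet> w s) integrable_on {0..1}" "(\<lambda>s. \<gamma> t s \<bullet> w s) integrable_on {0..1}"
    "(\<lambda>s. \<gamma>' t s \<bullet> w s) integrable_on {0..1}"
    by (intro integrable_continuous_interval continuous_intros c cw)+
  have "L2_inner (diff_quotient \<gamma> \<gamma>' t h) w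
      = integral {0..1} (\<lambda>s. (\<gamma> (t + h) s \<bullet> w s - \<gamma> t s \<bullet> w s) / h - \<gamma>' t s \<bullet> w s)"
    unfolding L2_inner_def diff_quotient_def by (simp add: inner_diff_left)
  also have "\<dots> = integral {0..1} (\<lambda>s. \<gamma> (t + h) s \<bullet> w s - \<gamma> t s \<bullet> w s) / h - L2_inner (\<gamma>' t) w"
    unfolding L2_inner_def
    using integral_diff[OF integrable_on_divide[OF integrable_diff[OF i(1,2)]] i(3)] by simp
  also have "integral {0..1} (\<lambda>s. \<gamma> (t + h) s \<bullet> w s - \<gamma> t s \<bullet> w s)
      = L2_inner (\<gamma> (t + h)) w - L2_inner (\<gamma> t) w"
    unfolding L2_inner_def by (rule integral_diff[OF i(1,2)])
  finally show ?thesis .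
qed

lemma L2_inner_path_has_derivative:
  assumes t: "t \<in> {0..1}" and cw: "continuous_on {0..1} w"
    and wB: "\<And>s. s \<in> {0..1} \<Longrightarrow> norm (w s) \<le> B"
  shows "((\<lambda>t. L2_inner (\<gamma> t) w) has_real_derivative L2_inner (\<gamma>' t) w) (at t within {0..1})"
proof -
  let ?Q = "diff_quotient \<gamma> \<gamma>' t"
  have B_nonneg: "0 \<le> B" using order_trans[OF norm_ge_zero wB[of 0]] by simp
  have bound: "\<bar>(L2_inner (\<gamma> (t + h)) w - L2_inner (\<gamma> t) w) / (t + h - t) - L2_inner (\<gamma>' t) w\<bar>
      \<le> B * H2_norm (?Q h)" if th: "t + h \<in> {0..1}" for h
  proof -
    have HQ: "H2_regular (?Q h)" by (rule H2_regular_diff_quotient[OF t th])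
    have "\<bar>(L2_inner (\<gamma> (t + h)) w - L2_inner (\<gamma> t) w) / (t + h - t) - L2_inner (\<gamma>' t) w\<bar>
        = \<bar>L2_inner (?Q h) w\<bar>"
      by (simp add: L2_inner_diff_quotient[OF t th cw])
    also have "\<dots> \<le> B * integral {0..1} (\<lambda>s. norm (?Q h s))"
      by (intro abs_L2_inner_le H2_regular_continuous_on[OF HQ] cw wB)
    also have "\<dots> \<le> B * H2_norm (?Q h)"
      using integral_norm_le_L2_norm[OF H2_regular_continuous_on[OF HQ]] L2_norm_le_H2_norm(1)[OF HQ]
      by (intro mult_left_mono B_nonneg) simp
    finally show ?thesis .
  qed
  have "((\<lambda>h. B * H2_norm (?Q h)) \<longlongrightarrow> B * 0) (at 0 within {h. t + h \<in> {0..1}})"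
    by (intro tendsto_intros C1_path_A_diff_quotient_tendsto[OF t])
  then have "((\<lambda>h. B * H2_norm (?Q h)) \<longlongrightarrow> 0) (at 0 within {h. t + h \<in> {0..1}})"
    by simp
  then have "((\<lambda>y. (L2_inner (\<gamma> y) w - L2_inner (\<gamma> t) w) / (y - t)) \<longlongrightarrow> L2_inner (\<gamma>' t) w)
      (at t within {0..1})"
    by (rule tendsto_at_within_if_offset_dominated[rotated]) (rule bound; assumption)
  then show ?thesis by (simp add: has_field_derivative_iff)
qed

lemma abs_L2_inner_path_le:
  assumes t: "t \<in> {0..1}" and cw: "continuous_on {0..1} w"
    and wB: "\<And>s. s \<in> {0..1} \<Longrightarrow> norm (w s) \<le> B"
  shows "\<bar>L2_inner (\<gamma> t) w\<bar> \<le> B * curve_length (\<gamma> t)"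
proof -
  have A: "in_A (\<gamma> t)" and H: "H2_regular (\<gamma> t)"
    by (intro C1_path_A_in_A C1_path_A_H2_regular t)+
  have "integral {0..1} (\<lambda>s. norm (\<gamma> t s)) \<le> integral {0..1} (\<lambda>s::real. curve_length (\<gamma> t))"
    by (intro integral_le integrable_continuous_interval continuous_intros H2_regular_continuous_on H)
      (simp add: in_A_norm_le_curve_length[OF A])
  then have "integral {0..1} (\<lambda>s. norm (\<gamma> t s)) \<le> curve_length (\<gamma> t)"
    by simp
  moreover have "0 \<le> B" using order_trans[OF norm_ge_zero wB[of 0]] by simp
  ultimately show ?thesis
    using abs_L2_inner_le[OF H2_regular_continuous_on[OF H] cw wB] by (meson mult_left_mono order_trans)
qed

lemma abs_L2_inner_path_derivative_le:
  assumes t: "t \<in> {0..1}" and cw: "continuous_on {0..1} w"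
    and wB: "\<And>s. s \<in> {0..1} \<Longrightarrow> norm (w s) \<le> B"
  shows "\<bar>L2_inner (\<gamma>' t) w\<bar> \<le> B * L2_norm (\<gamma>' t)"
proof -
  have c: "continuous_on {0..1} (\<gamma>' t)"
    by (intro H2_regular_continuous_on C1_path_A_H2_regular_derivative t)
  have "0 \<le> B" using order_trans[OF norm_ge_zero wB[of 0]] by simp
  then show ?thesis
    using abs_L2_inner_le[OF c cw wB] integral_norm_le_L2_norm[OF c] by (meson mult_left_mono order_trans)
qed

end

section \<open>The lower bound on the Riemannian length\<close>

definition signed_pow_three_halves :: "real \<Rightarrow> real" where
  "signed_pow_three_halves x = x * sqrt \<bar>x\<bar>"

lemma signed_pow_three_halves_has_derivative:
  "(signed_pow_three_halves has_real_derivative (3/2) * sqrt \<bar>x\<bar>) (at x)"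
proof -
  consider "x = 0" | "x > 0" | "x < 0" by linarith
  then show ?thesis
  proof cases
    case 1
    have "\<forall>\<^sub>F y in at 0. sqrt \<bar>y\<bar> = (signed_pow_three_halves y - signed_pow_three_halves 0) / (y - 0)"
      unfolding eventually_at_filter signed_pow_three_halves_def by (rule always_eventually) auto
    moreover have "((\<lambda>y::real. sqrt \<bar>y\<bar>) \<longlongrightarrow> sqrt \<bar>0\<bar>) (at 0)"
      by (intro tendsto_intros tendsto_ident_at)
    ultimately have "((\<lambda>y. (signed_pow_three_halves y - signed_pow_three_halves 0) / (y - 0)) \<longlongrightarrow> 0) (at 0)"
      using Lim_transform_eventually by simp
    then show ?thesis
      using 1 by (simp add: has_field_derivative_iff)
  next
    case 2
    have "((\<lambda>y. y * sqrt y) has_real_derivative 1 * sqrt x + (inverse (sqrt x) / 2) * x) (at x)"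
      by (intro DERIV_mult DERIV_ident DERIV_real_sqrt 2)
    also have "1 * sqrt x + (inverse (sqrt x) / 2) * x = (3/2) * sqrt \<bar>x\<bar>"
      using 2 by (simp add: field_simps)
    finally show ?thesis
      unfolding signed_pow_three_halves_def
      by (rule has_field_derivative_transform_within_open[of _ _ _ "{0<..}"]) (use 2 in auto)
  next
    case 3
    have "((\<lambda>y. y * sqrt (- y)) has_real_derivative 1 * sqrt (-x) + (inverse (sqrt (-x)) / 2 * -1) * x) (at x)"
      by (intro DERIV_mult DERIV_ident DERIV_chain2[OF DERIV_real_sqrt] DERIV_minus) (use 3 in auto)
    also have "1 * sqrt (-x) + (inverse (sqrt (-x)) / 2 * -1) * x = (3/2) * sqrt \<bar>x\<bar>"
      using 3 real_sqrt_mult_self[of "-x"] by (simp add: field_simps)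
    finally show ?thesis
      unfolding signed_pow_three_halves_def
      by (rule has_field_derivative_transform_within_open[of _ _ _ "{..<0}"]) (use 3 in auto)
  qed
qed

lemma signed_pow_three_halves_strict_mono: "strict_mono signed_pow_three_halves"
proof
  fix x y :: real assume "x < y"
  consider "0 \<le> x" | "y \<le> 0" | "x < 0" "0 < y" by linarith
  then have "x * sqrt \<bar>x\<bar> < y * sqrt \<bar>y\<bar>"
  proof cases
    case 1
    have "sqrt \<bar>x\<bar> < sqrt \<bar>y\<bar>" using 1 \<open>x < y\<close> by simp
    from mult_strict_mono'[OF \<open>x < y\<close> this 1 real_sqrt_ge_zero[OF abs_ge_zero]]
    show ?thesis .
  next
    case 2
    have sqrt_less: "sqrt (-y) < sqrt (-x)" using \<open>x < y\<close> by simp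
    have "(-y) * sqrt (-y) < (-x) * sqrt (-x)"
      by (rule mult_strict_mono'[OF _ sqrt_less]) (use 2 \<open>x < y\<close> in auto)
    moreover have "x * sqrt \<bar>x\<bar> = - ((-x) * sqrt (-x))" "y * sqrt \<bar>y\<bar> = - ((-y) * sqrt (-y))"
      using 2 \<open>x < y\<close> by auto
    ultimately show ?thesis by linarith
  next
    case 3
    then have "x * sqrt \<bar>x\<bar> < 0" "0 < y * sqrt \<bar>y\<bar>" by (simp_all add: mult_neg_pos)
    then show ?thesis by linarith
  qed
  then show "signed_pow_three_halves x < signed_pow_three_halves y"
    by (simp add: signed_pow_three_halves_def)
qed

lemma riem_length_lower_bound:
  assumes path: "C1_path_A \<gamma> \<gamma>'" and cw: "continuous_on {0..1} w"
    and wB: "\<And>s. s \<in> {0..1} \<Longrightarrow> norm (w s) \<le> B"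
  shows "signed_pow_three_halves (L2_inner (\<gamma> 1) w) - signed_pow_three_halves (L2_inner (\<gamma> 0) w)
    \<le> (3/2) * B * sqrt B * riem_length \<gamma> \<gamma>'"
proof -
  define \<psi> where "\<psi> t = L2_inner (\<gamma> t) w" for t
  define \<psi>' where "\<psi>' t = L2_inner (\<gamma>' t) w" for t
  define F where "F t = L2_norm (\<gamma>' t) * sqrt (curve_length (\<gamma> t))" for t
  have B_nonneg: "0 \<le> B" using order_trans[OF norm_ge_zero wB[of 0]] by simp
  have "((\<lambda>t. signed_pow_three_halves (\<psi> t)) has_vector_derivative (3/2) * sqrt \<bar>\<psi> t\<bar> * \<psi>' t)
      (at t within {0..1})" if "t \<in> {0..1}" for t
    using DERIV_chain2[OF signed_pow_three_halves_has_derivative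
        L2_inner_path_has_derivative[OF path that cw wB]]
    unfolding \<psi>_def \<psi>'_def by (simp add: has_real_derivative_iff_has_vector_derivative)
  then have ftc: "((\<lambda>t. (3/2) * sqrt \<bar>\<psi> t\<bar> * \<psi>' t) has_integral
      (signed_pow_three_halves (\<psi> 1) - signed_pow_three_halves (\<psi> 0))) {0..1}"
    by (intro fundamental_theorem_of_calculus) auto
  have "F integrable_on {0..1}"
    unfolding F_def by (intro integrable_continuous_interval continuous_intros
        continuous_on_L2_norm_derivative_path[OF path] continuous_on_curve_length_path[OF path])
  then have "norm (integral {0..1} (\<lambda>t. (3/2) * sqrt \<bar>\<psi> t\<bar> * \<psi>' t))
      \<le> integral {0..1} (\<lambda>t. (3/2) * B * sqrt B * F t)"
  proof (intro integral_norm_bound_integral has_integral_integrable[OF ftc] integrable_on_mult_right)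
    fix t :: real assume t: "t \<in> {0..1}"
    have "sqrt \<bar>\<psi> t\<bar> \<le> sqrt B * sqrt (curve_length (\<gamma> t))"
      using abs_L2_inner_path_le[OF path t cw wB] unfolding \<psi>_def by (simp add: real_sqrt_mult[symmetric])
    moreover have "\<bar>\<psi>' t\<bar> \<le> B * L2_norm (\<gamma>' t)"
      using abs_L2_inner_path_derivative_le[OF path t cw wB] unfolding \<psi>'_def .
    moreover have "0 \<le> curve_length (\<gamma> t)"
      using C1_path_A_in_A[OF path t] unfolding in_A_def by simp
    ultimately have "sqrt \<bar>\<psi> t\<bar> * \<bar>\<psi>' t\<bar> \<le> (sqrt B * sqrt (curve_length (\<gamma> t))) * (B * L2_norm (\<gamma>' t))"
      using B_nonneg by (intro mult_mono) auto
    then show "norm ((3/2) * sqrt \<bar>\<psi> t\<bar> * \<psi>' t) \<le> (3/2) * B * sqrt B * F t"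
      by (simp add: F_def abs_mult algebra_simps)
  qed
  then show ?thesis
    using integral_unique[OF ftc] unfolding riem_length_def F_def \<psi>_def by simp
qed

lemma dist_A_lower_bound:
  assumes "\<And>\<gamma> \<gamma>'. C1_path_A \<gamma> \<gamma>' \<Longrightarrow> \<gamma> 0 = \<eta>0 \<Longrightarrow> \<gamma> 1 = \<eta>1 \<Longrightarrow> c \<le> riem_length \<gamma> \<gamma>'"
  shows "ereal c \<le> dist_A \<eta>0 \<eta>1"
  unfolding dist_A_def using assms by (auto intro!: INF_greatest)

theorem proposition2p1:
  fixes \<eta>0 \<eta>1 :: "real \<Rightarrow> real^'d::finite"
  assumes "CARD('d) \<ge> 2"
    and "in_A \<eta>0" and "in_A \<eta>1" and "\<eta>0 \<noteq> \<eta>1"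
  shows "dist_A \<eta>0 \<eta>1 > 0"
proof -
  define w where "w s = \<eta>1 s - \<eta>0 s" for s
  have c: "continuous_on {0..1} \<eta>0" "continuous_on {0..1} \<eta>1"
    using assms(2,3) by (auto intro: H2_regular_continuous_on in_A_imp_H2_regular)
  then have cw: "continuous_on {0..1} w" unfolding w_def by (intro continuous_intros)
  obtain B where B: "B > 0" "\<And>s. s \<in> {0..1} \<Longrightarrow> norm (w s) \<le> B"
    using compact_imp_bounded[OF compact_continuous_image[OF cw compact_Icc]] by (auto simp: bounded_pos)
  obtain s where "s \<in> {0..1}" "\<eta>0 s \<noteq> \<eta>1 s"
    using periodic1_eqI assms(2-4) unfolding in_A_def in_K_def in_H2_def by blast
  then have "L2_inner \<eta>0 w < L2_inner \<eta>1 w"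
    unfolding w_def by (rule L2_inner_lt_if_differ[OF c])
  define \<delta> where "\<delta> = signed_pow_three_halves (L2_inner \<eta>1 w) - signed_pow_three_halves (L2_inner \<eta>0 w)"
  define K where "K = (3/2) * B * sqrt B"
  have "0 < \<delta>" "0 < K"
    using \<open>L2_inner \<eta>0 w < L2_inner \<eta>1 w\<close> strict_monoD[OF signed_pow_three_halves_strict_mono] B(1)
    unfolding \<delta>_def K_def by auto
  have "\<delta> / K \<le> riem_length \<gamma> \<gamma>'" if "C1_path_A \<gamma> \<gamma>'" "\<gamma> 0 = \<eta>0" "\<gamma> 1 = \<eta>1" for \<gamma> \<gamma>'
    using riem_length_lower_bound[OF that(1) cw B(2)] that(2,3) \<open>0 < K\<close>
    unfolding \<delta>_def K_def by (simp add: pos_divide_le_eq mult.commute)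
  then have "ereal (\<delta> / K) \<le> dist_A \<eta>0 \<eta>1"
    by (rule dist_A_lower_bound)
  moreover have "0 < ereal (\<delta> / K)" using \<open>0 < \<delta>\<close> \<open>0 < K\<close> by simp
  ultimately show ?thesis by (meson less_le_trans)
qed

end
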